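(* Let $\hat\rho$ be a density operator on $L^2(\mathbb R)$ with bounded Fock support. The following are equivalent: (i) $\hat\rho$ is an eigenvector of $\mathcal V_t$ for some $t>1$; (ii) $\hat\rho$ is an eigenvector of $\mathcal V_t$ for all $t\ge1$; (iii) there exists $m\in\mathbb N$ such that $W_{\hat\rho}(\alpha)\propto|\alpha|^{2m}e^{-2|\alpha|^2}$, and the corresponding eigenvalue is $t^m$; (iv) there exists $m\in\mathbb N$ such that $\hat\rho=\frac1{2^m}\sum_{k=0}^m\binom mk|k\rangle\langle k|$.
   Context: Let $\hat a$ be the annihilation operator on $L^2(\mathbb R)$, $\hat n=\hat a^\dagger\hat a$, $\{|k\rangle\}$ the Fock basis, $\hat D(\alpha)=\exp(\alpha\hat a^\dagger-\alpha^*\hat a)$, and $W_{\hat A}(\alpha)=\frac2\pi\mathrm{Tr}[\hat A\hat D(\alpha)(-1)^{\hat n}\hat D(\alpha)^\dagger]$ the Wigner function. An operator $\hat A$ has bounded Fock support if $\hat P_N\hat A\hat P_N=\hat A$ for some $N$, where $\hat P_N=\sum_{k=0}^N|k\rangle\langle k|$. For $t>0$, the Vertigo map on such operators is $\mathcal V_t[\hat A]=\sum_{k\ge0}\frac{(t-1)^k}{k!}t^{\hat n/2}\hat a^k\hat A\hat a^{\dagger k}t^{\hat n/2}$ (finite sum), equivalently $W_{\mathcal V_t[\hat A]}(\alpha)=W_{\hat A}(\sqrt t\alpha)e^{2(t-1)|\alpha|^2}$. "Eigenvector of $\mathcal V_t$" means $\mathcal V_t[\hat\rho]=\lambda\hat\rho$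 for some scalar $\lambda$. *)

theory Defs
  imports "HOL-Analysis.Analysis"
begin

text \<open>Operators with bounded Fock support are represented by their Fock-basis
matrix elements: A i j = <i|A|j>.\<close>
type_synonym fock_op = "nat \<Rightarrow> nat \<Rightarrow> complex"

definition bounded_fock_support :: "fock_op \<Rightarrow> bool" where
  "bounded_fock_support A \<longleftrightarrow> (\<exists>N. \<forall>i j. (N < i \<or> N < j) \<longrightarrow> A i j = 0)"

definition density_op :: "fock_op \<Rightarrow> bool" where
  "density_op A \<longleftrightarrow> bounded_fock_support A \<and>
     (\<forall>i j. A i j = cnj (A j i)) \<and>
     (\<forall>N. (\<forall>i j. (N < i \<or> N < j) \<longrightarrow> A i j = 0) \<longrightarrow>
        (\<forall>v :: nat \<Rightarrow> complex.
           0 \<le> Re (\<Sum>i\<le>N. \<Sum>j\<le>N. cnj (v i) * A i j * v j)) \<and>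
        (\<Sum>i\<le>N. A i i) = 1)"

text \<open>Vertigo map: matrix elements of
 sum_k (t-1)^k/k! t^(n/2) a^k A a^dagger^k t^(n/2), using
 a|n> = sqrt n |n-1>.  The sum ranges over the finitely many k contributing.\<close>
definition vertigo :: "real \<Rightarrow> fock_op \<Rightarrow> fock_op" where
  "vertigo t A = (\<lambda>i j. \<Sum>k\<in>{k. A (i+k) (j+k) \<noteq> 0}.
      complex_of_real ((t - 1) ^ k / fact k * t powr (real (i + j) / 2)
        * sqrt (fact (i + k) / fact i) * sqrt (fact (j + k) / fact j))
      * A (i+k) (j+k))"

text \<open>Fock matrix elements <m|D(alpha)|n> of the displacement operator, computed from
 D(alpha) = exp(-|alpha|^2/2) exp(alpha a^dagger) exp(-cnj alpha a).\<close>
definition displ :: "complex \<Rightarrow> nat \<Rightarrow> nat \<Rightarrow> complex" where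
  "displ \<alpha> m n = exp (- complex_of_real ((cmod \<alpha>)\<^sup>2 / 2)) *
     (\<Sum>k\<le>min m n. \<alpha> ^ (m - k) * (- cnj \<alpha>) ^ (n - k) *
        complex_of_real (sqrt (fact m * fact n) / (fact k * fact (m - k) * fact (n - k))))"

text \<open>Matrix element <j| D(alpha) (-1)^n D(alpha)^dagger |i>.\<close>
definition displaced_parity :: "complex \<Rightarrow> nat \<Rightarrow> nat \<Rightarrow> complex" where
  "displaced_parity \<alpha> j i = (\<Sum>l. displ \<alpha> j l * (-1) ^ l * cnj (displ \<alpha> i l))"

text \<open>Wigner function W_A(alpha) = 2/pi Tr[A D(alpha) (-1)^n D(alpha)^dagger].\<close>
definition wigner :: "fock_op \<Rightarrow> complex \<Rightarrow> complex" where
  "wigner A \<alpha> = complex_of_real (2 / pi) *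
     (\<Sum>(i, j)\<in>{(i, j). A i j \<noteq> 0}. A i j * displaced_parity \<alpha> j i)"

definition is_eigvec_vertigo :: "real \<Rightarrow> fock_op \<Rightarrow> bool" where
  "is_eigvec_vertigo t A \<longleftrightarrow> (\<exists>c::complex. vertigo t A = (\<lambda>i j. c * A i j))"

end

theory Submission
  imports Defs
begin

text \<open>
  In the Fock basis \<open>vertigo t\<close> maps the entry \<open>(i, j)\<close> to \<open>t powr ((i + j) / 2)\<close> times itself plus
  a combination of the entries \<open>(i + k, j + k)\<close>, \<open>k > 0\<close>, further down its diagonal. Positivity lets
  the largest occupied diagonal index \<open>M\<close> bound the support, so the eigenvalue is \<open>t ^ M\<close>; the
  binomial state of order \<open>M\<close> is an eigenvector for it by the binomial theorem, and a downward
  induction shows that \<open>\<rho>\<close> minus the matching multiple of it vanishes.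

  For the Wigner function, \<open>\<langle>j| D(\<alpha>) (-1)\<^sup>n D(\<alpha>)\<^sup>\<dagger> |i\<rangle>\<close> equals
  \<open>exp (-2 |\<alpha>|\<^sup>2) H\<^sub>j\<^sub>,\<^sub>i(2 \<alpha>, 2 cnj \<alpha>) / sqrt (j! i!)\<close> (Vandermonde's identity sums the series over
  the intermediate index), so \<open>W\<^sub>\<rho>\<close> is a Gaussian times a polynomial in \<open>\<alpha>\<close> and \<open>cnj \<alpha>\<close>. That polynomial
  determines \<open>\<rho>\<close> by the same triangular structure, and by binomial inversion it is a multiple of
  \<open>|\<alpha>|\<^sup>2\<^sup>m\<close> exactly for the binomial state of order \<open>m\<close>.
\<close>

definition fock_supported :: "nat \<Rightarrow> fock_op \<Rightarrow> bool" where
  "fock_supported N A \<longleftrightarrow> (\<forall>i j. N < i \<or> N < j \<longrightarrow> A i j = 0)"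

lemma fock_supportedD: "fock_supported N A \<Longrightarrow> N < i \<or> N < j \<Longrightarrow> A i j = 0"
  by (auto simp: fock_supported_def)

lemma fock_supported_nonzero: "fock_supported N A \<Longrightarrow> A i j \<noteq> 0 \<Longrightarrow> i \<le> N \<and> j \<le> N"
  by (meson fock_supportedD not_le)

lemma fock_supported_mono: "fock_supported N A \<Longrightarrow> N \<le> N' \<Longrightarrow> fock_supported N' A"
  by (simp add: fock_supported_def)

lemma fock_supported_diff:
  "fock_supported N A \<Longrightarrow> fock_supported N B \<Longrightarrow> fock_supported N (\<lambda>i j. A i j - l * B i j)"
  by (simp add: fock_supported_def)

lemma density_op_supported:
  assumes "density_op \<rho>"
  obtains N where "fock_supported N \<rho>"
  using assms unfolding density_op_def bounded_fock_support_def fock_supported_def by blast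

lemma density_op_hermitian: "density_op \<rho> \<Longrightarrow> \<rho> i j = cnj (\<rho> j i)"
  unfolding density_op_def by blast

lemma density_op_trace: "density_op \<rho> \<Longrightarrow> fock_supported N \<rho> \<Longrightarrow> (\<Sum>i\<le>N. \<rho> i i) = 1"
  unfolding density_op_def fock_supported_def by blast

lemma density_op_psd:
  "density_op \<rho> \<Longrightarrow> fock_supported N \<rho> \<Longrightarrow> 0 \<le> Re (\<Sum>a\<le>N. \<Sum>b\<le>N. cnj (v a) * \<rho> a b * v b)"
  unfolding density_op_def fock_supported_def by blast

lemma density_op_row_vanishes:
  assumes dens: "density_op \<rho>" and zero: "\<rho> i i = 0"
  shows "\<rho> i j = 0"
proof (rule ccontr)
  assume "\<rho> i j \<noteq> 0"
  obtain N where supp: "fock_supported N \<rho>" using dens by (rule density_op_supported)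
  have ij: "i \<le> N" "j \<le> N" "i \<noteq> j"
    using \<open>\<rho> i j \<noteq> 0\<close> zero fock_supported_nonzero[OF supp] by metis+
  define w where "w = \<rho> i j"
  define r where "r = (Re (\<rho> j j) + 1) / (2 * (cmod w)\<^sup>2)"
  define v where "v l = (if l = i then - of_real r * w else if l = j then 1 else 0)" for l
  \<comment> \<open>the test vector \<open>v = -r w |i> + |j>\<close> gives the quadratic form the value \<open>-2 r |w|\<^sup>2 + \<rho> j j = -1\<close>\<close>
  have "(\<Sum>a\<le>N. \<Sum>b\<le>N. cnj (v a) * \<rho> a b * v b) = (\<Sum>a\<in>{i,j}. \<Sum>b\<in>{i,j}. cnj (v a) * \<rho> a b * v b)"
    using ij by (intro sum.mono_neutral_cong_right) (auto simp: v_def intro!: sum.mono_neutral_right)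
  also have "\<dots> = \<rho> j j - 2 * of_real r * (cnj w * w)"
    using ij zero density_op_hermitian[OF dens, of j i] by (simp add: v_def w_def algebra_simps)
  also have "\<dots> = \<rho> j j - of_real (2 * r * (cmod w)\<^sup>2)"
    by (simp only: of_real_mult of_real_numeral complex_norm_square mult_ac)
  also have "2 * r * (cmod w)\<^sup>2 = Re (\<rho> j j) + 1"
    using \<open>\<rho> i j \<noteq> 0\<close> by (simp add: r_def w_def)
  finally have "Re (\<Sum>a\<le>N. \<Sum>b\<le>N. cnj (v a) * \<rho> a b * v b) = -1"
    by simp
  with density_op_psd[OF dens supp, of v] show False by simp
qed

lemma density_op_supported_by_diag:
  assumes dens: "density_op \<rho>" and diag: "\<And>i. M < i \<Longrightarrow> \<rho> i i = 0"
  shows "fock_supported M \<rho>"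
  unfolding fock_supported_def
proof (intro allI impI)
  fix i j assume "M < i \<or> M < j"
  then show "\<rho> i j = 0"
    using density_op_row_vanishes[OF dens diag] density_op_hermitian[OF dens, of i j]
    by (metis complex_cnj_zero)
qed

definition vertigo_coeff :: "real \<Rightarrow> nat \<Rightarrow> nat \<Rightarrow> nat \<Rightarrow> real" where
  "vertigo_coeff t i j k = (t - 1) ^ k / fact k * t powr (real (i + j) / 2)
     * sqrt (fact (i + k) / fact i) * sqrt (fact (j + k) / fact j)"

lemma vertigo_eq_sum:
  assumes "fock_supported N A"
  shows "vertigo t A i j = (\<Sum>k\<le>N. of_real (vertigo_coeff t i j k) * A (i + k) (j + k))"
  unfolding vertigo_def vertigo_coeff_def
proof (rule sum.mono_neutral_left)
  show "{k. A (i + k) (j + k) \<noteq> 0} \<subseteq> {..N}"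
    using fock_supported_nonzero[OF assms] by fastforce
qed auto

lemma vertigo_diff:
  assumes "fock_supported N A" and "fock_supported N B"
  shows "vertigo t (\<lambda>i j. A i j - l * B i j) i j = vertigo t A i j - l * vertigo t B i j"
  unfolding vertigo_eq_sum[OF fock_supported_diff[OF assms]] vertigo_eq_sum[OF assms(1)]
    vertigo_eq_sum[OF assms(2)]
  by (simp add: sum_subtractf sum_distrib_left algebra_simps)

lemma vertigo_leading_term:
  assumes "fock_supported N A" and "\<And>k. 0 < k \<Longrightarrow> A (i + k) (j + k) = 0"
  shows "vertigo t A i j = of_real (t powr (real (i + j) / 2)) * A i j"
proof -
  have "vertigo t A i j = (\<Sum>k\<in>{0}. of_real (vertigo_coeff t i j k) * A (i + k) (j + k))"
    unfolding vertigo_eq_sum[OF assms(1)] using assms(2) by (intro sum.mono_neutral_right) auto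
  then show ?thesis by (simp add: vertigo_coeff_def)
qed

definition binomial_state :: "nat \<Rightarrow> fock_op" where
  "binomial_state m = (\<lambda>i j. if i = j \<and> i \<le> m then of_real (real (m choose i) / 2 ^ m) else 0)"

lemma binomial_state_supported: "fock_supported m (binomial_state m)"
  by (simp add: fock_supported_def binomial_state_def)

lemma binomial_state_trace:
  assumes "m \<le> N"
  shows "(\<Sum>i\<le>N. binomial_state m i i) = 1"
proof -
  have "(\<Sum>i\<le>N. binomial_state m i i) = (\<Sum>i\<le>m. of_real (real (m choose i) / 2 ^ m))"
    using assms by (intro sum.mono_neutral_cong_right) (auto simp: binomial_state_def)
  also have "\<dots> = of_real (real (\<Sum>i\<le>m. m choose i) / 2 ^ m)"
    by (simp add: sum_divide_distrib)
  finally show ?thesis by (simp add: choose_row_sum)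
qed

lemma density_op_eq_binomial_state:
  assumes dens: "density_op \<rho>" and scaled: "\<And>i j. \<rho> i j = l * binomial_state m i j"
  shows "\<rho> = binomial_state m"
proof -
  have "fock_supported m \<rho>"
    using binomial_state_supported by (simp add: fock_supported_def scaled)
  then have "1 = (\<Sum>i\<le>m. \<rho> i i)" by (rule density_op_trace[OF dens, symmetric])
  also have "\<dots> = l" by (simp add: scaled binomial_state_trace flip: sum_distrib_left)
  finally show ?thesis using scaled by auto
qed

lemma vertigo_coeff_binomial_sum:
  assumes t: "0 < t" and i: "i \<le> m"
  shows "(\<Sum>k\<le>m - i. vertigo_coeff t i i k * real (m choose (i + k))) = t ^ m * real (m choose i)"
proof -
  have summand: "vertigo_coeff t i i k * real (m choose (i + k))
      = t ^ i * real (m choose i) * (real (m - i choose k) * (t - 1) ^ k * 1 ^ (m - i - k))"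
    if k: "k \<le> m - i" for k
  proof -
    have "sqrt (fact (i + k) / fact i) * sqrt (fact (i + k) / fact i) = (fact (i + k) / fact i :: real)"
      by simp
    moreover have "t powr (real (i + i) / 2) = t ^ i"
      using t by (simp add: powr_realpow)
    ultimately have "vertigo_coeff t i i k = (t - 1) ^ k * t ^ i * (fact (i + k) / (fact i * fact k))"
      unfolding vertigo_coeff_def by (simp add: field_simps)
    also have "fact (i + k) / (fact i * fact k) = real (i + k choose i)"
      by (simp add: binomial_fact)
    finally have "vertigo_coeff t i i k * real (m choose (i + k))
        = (t - 1) ^ k * t ^ i * (real (m choose (i + k)) * real (i + k choose i))"
      by simp
    also have "real (m choose (i + k)) * real (i + k choose i) = real (m choose i) * real (m - i choose k)"
      using choose_mult[of i "i + k" m] k i by (simp flip: of_nat_mult)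
    finally show ?thesis by simp
  qed
  have "(\<Sum>k\<le>m - i. vertigo_coeff t i i k * real (m choose (i + k)))
      = t ^ i * real (m choose i) * (\<Sum>k\<le>m - i. real (m - i choose k) * (t - 1) ^ k * 1 ^ (m - i - k))"
    by (simp add: summand sum_distrib_left)
  also have "\<dots> = t ^ i * real (m choose i) * t ^ (m - i)"
    using binomial_ring[of "t - 1" 1 "m - i"] by simp
  also have "\<dots> = t ^ m * real (m choose i)"
    using i by (simp add: power_add[symmetric])
  finally show ?thesis .
qed

lemma vertigo_binomial_state:
  assumes "0 < t"
  shows "vertigo t (binomial_state m) = (\<lambda>i j. of_real (t ^ m) * binomial_state m i j)"
proof (intro ext)
  fix i j
  have expand: "vertigo t (binomial_state m) i j
      = (\<Sum>k\<le>m. of_real (vertigo_coeff t i j k) * binomial_state m (i + k) (j + k))"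
    by (rule vertigo_eq_sum[OF binomial_state_supported])
  show "vertigo t (binomial_state m) i j = of_real (t ^ m) * binomial_state m i j"
  proof (cases "i = j \<and> i \<le> m")
    case True
    then have "vertigo t (binomial_state m) i j
        = of_real ((\<Sum>k\<le>m - i. vertigo_coeff t i i k * real (m choose (i + k))) / 2 ^ m)"
      unfolding expand
      by (auto simp: binomial_state_def sum_divide_distrib split: if_splits intro!: sum.mono_neutral_cong_right)
    with True show ?thesis
      by (simp add: vertigo_coeff_binomial_sum[OF assms] binomial_state_def)
  next
    case False
    then have "binomial_state m (i + k) (j + k) = 0" for k
      by (auto simp: binomial_state_def)
    moreover have "binomial_state m i j = 0"
      using False by (simp add: binomial_state_def)
    ultimately show ?thesis unfolding expand by simp
  qed
qed

lemma vertigo_eigvec_vanishes: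
  assumes t: "1 < t" and supp: "fock_supported M D"
    and eig: "vertigo t D = (\<lambda>i j. of_real (t ^ M) * D i j)" and top: "D M M = 0"
  shows "D i j = 0"
proof (induction "M - i" arbitrary: i j rule: less_induct)
  case less
  have lower: "D (i + k) (j + k) = 0" if "0 < k" for k
  proof (cases "M < i + k")
    case True
    then show ?thesis using fock_supportedD[OF supp] by blast
  next
    case False
    then show ?thesis using less[of "i + k"] that by simp
  qed
  have eq: "of_real (t ^ M) * D i j = of_real (t powr (real (i + j) / 2)) * D i j"
    using vertigo_leading_term[OF supp lower, of t] eig by metis
  show "D i j = 0"
  proof (rule ccontr)
    assume "D i j \<noteq> 0"
    then have "i \<le> M" "j \<le> M" using fock_supported_nonzero[OF supp] by blast+
    from eq \<open>D i j \<noteq> 0\<close> have "t ^ M = t powr (real (i + j) / 2)"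
      by (metis mult_cancel_right of_real_eq_iff)
    then have "t powr real M = t powr (real (i + j) / 2)"
      using t by (simp add: powr_realpow)
    then have "real M = real (i + j) / 2" using t by (simp add: powr_inj)
    then have "real (2 * M) = real (i + j)" by simp
    then have "i = M" "j = M" using \<open>i \<le> M\<close> \<open>j \<le> M\<close> by linarith+
    with \<open>D i j \<noteq> 0\<close> top show False by simp
  qed
qed

lemma density_op_top_diag:
  assumes dens: "density_op \<rho>"
  obtains M where "\<rho> M M \<noteq> 0" and "fock_supported M \<rho>"
proof -
  obtain N where supp: "fock_supported N \<rho>" using dens by (rule density_op_supported)
  have bound: "i \<le> N" if "\<rho> i i \<noteq> 0" for i
    using fock_supported_nonzero[OF supp] that by blast
  have "\<exists>i. \<rho> i i \<noteq> 0"
  proof (rule ccontr)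
    assume "\<nexists>i. \<rho> i i \<noteq> 0"
    then have "(\<Sum>i\<le>N. \<rho> i i) = 0" by simp
    with density_op_trace[OF dens supp] show False by simp
  qed
  then obtain i where "\<rho> i i \<noteq> 0" ..
  define M where "M = (GREATEST i. \<rho> i i \<noteq> 0)"
  have "\<rho> M M \<noteq> 0"
    unfolding M_def using \<open>\<rho> i i \<noteq> 0\<close> bound by (rule GreatestI_nat)
  moreover have "\<rho> i i = 0" if "M < i" for i
  proof (rule ccontr)
    assume "\<rho> i i \<noteq> 0"
    then have "i \<le> M" unfolding M_def using bound by (intro Greatest_le_nat) auto
    with that show False by simp
  qed
  then have "fock_supported M \<rho>" by (rule density_op_supported_by_diag[OF dens])
  ultimately show ?thesis by (rule that)
qed

lemma eigvec_vertigo_imp_binomial_state: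
  assumes dens: "density_op \<rho>" and t: "1 < t" and "is_eigvec_vertigo t \<rho>"
  shows "\<exists>m. \<rho> = binomial_state m"
proof -
  obtain c where c: "vertigo t \<rho> = (\<lambda>i j. c * \<rho> i j)"
    using assms(3) by (auto simp: is_eigvec_vertigo_def)
  obtain M where MM: "\<rho> M M \<noteq> 0" and suppM: "fock_supported M \<rho>"
    using dens by (rule density_op_top_diag)
  have "c * \<rho> M M = vertigo t \<rho> M M" by (simp add: c)
  also have "\<dots> = of_real (t powr (real (M + M) / 2)) * \<rho> M M"
    by (rule vertigo_leading_term[OF suppM]) (simp add: fock_supportedD[OF suppM])
  also have "t powr (real (M + M) / 2) = t ^ M" using t by (simp add: powr_realpow)
  finally have cM: "c = of_real (t ^ M)" using MM by simp
  define l where "l = \<rho> M M * 2 ^ M"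
  define D where "D i j = \<rho> i j - l * binomial_state M i j" for i j
  have suppD: "fock_supported M D"
    unfolding D_def by (rule fock_supported_diff[OF suppM binomial_state_supported])
  have "vertigo t D i j = of_real (t ^ M) * D i j" for i j
  proof -
    have "vertigo t D i j = vertigo t \<rho> i j - l * vertigo t (binomial_state M) i j"
      unfolding D_def by (rule vertigo_diff[OF suppM binomial_state_supported])
    also have "\<dots> = of_real (t ^ M) * D i j"
      using t by (simp add: c cM vertigo_binomial_state D_def algebra_simps)
    finally show ?thesis .
  qed
  then have "vertigo t D = (\<lambda>i j. of_real (t ^ M) * D i j)" by blast
  moreover have "D M M = 0" by (simp add: D_def l_def binomial_state_def)
  ultimately have "D i j = 0" for i j by (rule vertigo_eigvec_vanishes[OF t suppD])
  then have "\<rho> i j = l * binomial_state M i j" for i j by (simp add: D_def)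
  then have "\<rho> = binomial_state M" by (rule density_op_eq_binomial_state[OF dens])
  then show ?thesis ..
qed

definition complex_hermite :: "complex \<Rightarrow> complex \<Rightarrow> nat \<Rightarrow> nat \<Rightarrow> complex" where
  "complex_hermite x y m n = (\<Sum>r\<le>min m n.
     (-1) ^ r * (fact m * fact n / (fact r * fact (m - r) * fact (n - r))) * x ^ (m - r) * y ^ (n - r))"

lemma fact_quotient_vandermonde:
  assumes "k \<le> l" "k' \<le> l"
  shows "(fact l / (fact (l - k) * fact (l - k')) :: 'a::field_char_0) =
    (\<Sum>r\<le>min k k'. if k + k' \<le> l + r then fact k * fact k' /
        (fact r * fact (k - r) * fact (k' - r) * fact (l + r - k - k')) else 0)"
proof -
  have vandermonde: "(\<Sum>r\<le>k. (k' choose r) * ((l - k') choose (k - r))) = l choose k"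
    using vandermonde[of k' "l - k'" k] assms by simp
  have "(fact l / (fact (l - k) * fact (l - k')) :: 'a) = of_nat (l choose k) * fact k / fact (l - k')"
    using assms by (simp add: binomial_fact field_simps)
  also have "\<dots> = (\<Sum>r\<le>k. of_nat (k' choose r) * of_nat ((l - k') choose (k - r)) * fact k / fact (l - k'))"
    unfolding vandermonde[symmetric] by (simp add: sum_distrib_right sum_divide_distrib)
  also have "\<dots> = (\<Sum>r\<le>k. if r \<le> k' \<and> k + k' \<le> l + r then fact k * fact k' /
        (fact r * fact (k - r) * fact (k' - r) * fact (l + r - k - k')) else 0)"
  proof (rule sum.cong[OF refl])
    fix r assume r: "r \<in> {..k}"
    show "of_nat (k' choose r) * of_nat ((l - k') choose (k - r)) * fact k / fact (l - k') =
      (if r \<le> k' \<and> k + k' \<le> l + r then fact k * fact k' /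
        (fact r * fact (k - r) * fact (k' - r) * fact (l + r - k - k')) else (0::'a))"
    proof (cases "r \<le> k' \<and> k + k' \<le> l + r")
      case True
      then have e: "l - k' - (k - r) = l + r - k - k'" using r by auto
      have b1: "(of_nat (k' choose r) :: 'a) = fact k' / (fact r * fact (k' - r))"
        using True by (simp add: binomial_fact)
      have b2: "(of_nat ((l - k') choose (k - r)) :: 'a) = fact (l - k') / (fact (k - r) * fact (l + r - k - k'))"
        using True r assms by (subst binomial_fact) (simp_all only: e, auto)
      have "l + r - (k' + k) = l + r - (k + k')" by simp
      with True r assms show ?thesis by (simp add: b1 b2 field_simps)
    next
      case False
      then have "k' choose r = 0 \<or> (l - k') choose (k - r) = 0" using r assms by auto
      with False show ?thesis by auto
    qed
  qed
  also have "\<dots> = (\<Sum>r\<le>min k k'. if k + k' \<le> l + r then fact k * fact k' /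
        (fact r * fact (k - r) * fact (k' - r) * fact (l + r - k - k')) else 0)"
    by (rule sum.mono_neutral_cong_right) auto
  finally show ?thesis .
qed

lemma exp_sums_complex: "(\<lambda>n. z ^ n / fact n) sums exp (z :: complex)"
  using exp_converges[of z] by (simp add: scaleR_conv_of_real divide_inverse mult.commute)

lemma shifted_exp_series_sums:
  fixes x y :: complex
  assumes r: "r \<le> min k k'"
  shows "(\<lambda>l. if k + k' \<le> l + r then (-1) ^ l * (-y) ^ (l - k) * (-x) ^ (l - k') / fact (l + r - k - k') else 0)
    sums ((-1) ^ r * x ^ (k - r) * y ^ (k' - r) * exp (- (x * y)))"
    (is "?h sums _")
proof -
  define s where "s = k + k' - r"
  have "?h (i + s) = (-1) ^ r * x ^ (k - r) * y ^ (k' - r) * ((- (x * y)) ^ i / fact i)" for i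
  proof -
    have e: "i + s - k = i + (k' - r)" "i + s - k' = i + (k - r)" "i + s + r - k - k' = i"
      "k + k' \<le> i + s + r"
      using r unfolding s_def by auto
    have "even (i + s + (i + (k' - r)) + (i + (k - r)) + (r + i))"
      using r unfolding s_def by auto
    then have "(-1::complex) ^ (i + s + (i + (k' - r)) + (i + (k - r))) = (-1) ^ (r + i)"
      by (auto simp: minus_one_power_iff)
    then have sign: "(-1::complex) ^ (i + s) * (-1) ^ (i + (k' - r)) * (-1) ^ (i + (k - r)) = (-1) ^ r * (-1) ^ i"
      by (simp add: power_add)
    have "?h (i + s) = ((-1) ^ (i + s) * (-1) ^ (i + (k' - r)) * (-1) ^ (i + (k - r)))
        * y ^ (i + (k' - r)) * x ^ (i + (k - r)) / fact i"
      using e by (simp add: power_minus[of y] power_minus[of x] mult_ac)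
    also have "\<dots> = (-1) ^ r * x ^ (k - r) * y ^ (k' - r) * ((- (x * y)) ^ i / fact i)"
      unfolding sign by (simp add: power_add power_minus[of "x * y"] power_mult_distrib mult_ac)
    finally show ?thesis .
  qed
  then have "(\<lambda>i. ?h (i + s)) sums ((-1) ^ r * x ^ (k - r) * y ^ (k' - r) * exp (- (x * y)))"
    by (simp only: sums_mult[OF exp_sums_complex])
  moreover have "?h i = 0" if "i < s" for i
    using that r unfolding s_def by auto
  ultimately show ?thesis using sums_zero_iff_shift[of s ?h] by simp
qed

definition displ_term :: "complex \<Rightarrow> nat \<Rightarrow> nat \<Rightarrow> nat \<Rightarrow> complex" where
  "displ_term \<alpha> m n k = (if k \<le> n
     then \<alpha> ^ (m - k) * (- cnj \<alpha>) ^ (n - k) * of_real (sqrt (fact m * fact n) / (fact k * fact (m - k) * fact (n - k)))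
     else 0)"

lemma displ_eq_sum: "displ \<alpha> m n = of_real (exp (- ((cmod \<alpha>)\<^sup>2 / 2))) * (\<Sum>k\<le>m. displ_term \<alpha> m n k)"
proof -
  have "(\<Sum>k\<le>min m n. \<alpha> ^ (m - k) * (- cnj \<alpha>) ^ (n - k) *
        of_real (sqrt (fact m * fact n) / (fact k * fact (m - k) * fact (n - k)))) = (\<Sum>k\<le>m. displ_term \<alpha> m n k)"
    unfolding displ_term_def by (rule sum.mono_neutral_cong_left) auto
  then show ?thesis by (simp add: displ_def flip: exp_of_real)
qed

text \<open>The terms of the series over the intermediate Fock index \<open>l\<close> in
  \<open>\<langle>j| D(\<alpha>) (-1)\<^sup>n D(\<alpha>)\<^sup>\<dagger> |i\<rangle>\<close>, after expanding both factors with \<open>displ_term\<close>.\<close>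

definition parity_series_term :: "complex \<Rightarrow> complex \<Rightarrow> nat \<Rightarrow> nat \<Rightarrow> nat \<Rightarrow> complex" where
  "parity_series_term x y k k' l = (if k \<le> l \<and> k' \<le> l
     then (-1) ^ l * (-y) ^ (l - k) * (-x) ^ (l - k') * (fact l / (fact (l - k) * fact (l - k'))) else 0)"

lemma parity_series_sums:
  "parity_series_term x y k k' sums (exp (- (x * y)) * complex_hermite x y k k')"
proof -
  define C where "C r = (fact k * fact k' / (fact r * fact (k - r) * fact (k' - r)) :: complex)" for r
  define h where "h r l = (if k + k' \<le> l + r
    then (-1) ^ l * (-y) ^ (l - k) * (-x) ^ (l - k') / fact (l + r - k - k') else 0)" for r l
  have "parity_series_term x y k k' = (\<lambda>l. \<Sum>r\<le>min k k'. C r * h r l)"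
  proof
    fix l
    show "parity_series_term x y k k' l = (\<Sum>r\<le>min k k'. C r * h r l)"
    proof (cases "k \<le> l \<and> k' \<le> l")
      case True
      then have "parity_series_term x y k k' l
          = (-1) ^ l * (-y) ^ (l - k) * (-x) ^ (l - k') * (fact l / (fact (l - k) * fact (l - k')))"
        by (simp add: parity_series_term_def)
      also have "\<dots> = (\<Sum>r\<le>min k k'. C r * h r l)"
        unfolding fact_quotient_vandermonde[OF True[THEN conjunct1] True[THEN conjunct2]] h_def C_def
        by (auto simp: sum_distrib_left mult_ac intro!: sum.cong)
      finally show ?thesis .
    next
      case False
      then have "parity_series_term x y k k' l = 0"
        unfolding parity_series_term_def by (rule if_not_P)
      moreover have "h r l = 0" if "r \<le> min k k'" for r
        using that False by (auto simp: h_def)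
      ultimately show ?thesis by simp
    qed
  qed
  also have "\<dots> sums (\<Sum>r\<le>min k k'. C r * ((-1) ^ r * x ^ (k - r) * y ^ (k' - r) * exp (- (x * y))))"
    unfolding h_def by (intro sums_sum sums_mult shifted_exp_series_sums) simp
  also have "\<dots> = exp (- (x * y)) * complex_hermite x y k k'"
    by (simp add: complex_hermite_def C_def sum_distrib_left mult_ac)
  finally show ?thesis .
qed

lemma sum_inverse_fact_shifted:
  assumes "r \<le> j"
  shows "(\<Sum>k\<le>j. if r \<le> k then 1 / (fact (j - k) * fact (k - r)) else 0)
    = (2::'a::field_char_0) ^ (j - r) / fact (j - r)"
proof -
  have "(\<Sum>k\<le>j. if r \<le> k then 1 / (fact (j - k) * fact (k - r)) else (0::'a))
      = (\<Sum>k\<in>{r..j}. 1 / (fact (j - k) * fact (k - r)))"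
    by (rule sum.mono_neutral_cong_right) auto
  also have "\<dots> = (\<Sum>s\<in>{0..j - r}. 1 / (fact (j - (s + r)) * fact (s + r - r)))"
    using sum.shift_bounds_cl_nat_ivl[of "\<lambda>k. 1 / (fact (j - k) * fact (k - r)) :: 'a" 0 r "j - r"] assms
    by (simp add: add.commute)
  also have "\<dots> = (\<Sum>s\<le>j - r. of_nat (j - r choose s) / fact (j - r))"
    by (rule sum.cong) (auto simp: binomial_fact field_simps diff_diff_add atLeast0AtMost)
  also have "\<dots> = of_nat (\<Sum>s\<le>j - r. j - r choose s) / fact (j - r)"
    by (simp add: sum_divide_distrib)
  finally show ?thesis by (simp add: choose_row_sum)
qed

lemma complex_hermite_doubling:
  fixes x y :: complex
  shows "(\<Sum>k\<le>j. \<Sum>k'\<le>i. x ^ (j - k) * y ^ (i - k') / (fact k * fact (j - k) * fact k' * fact (i - k'))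
      * complex_hermite x y k k')
   = complex_hermite (2 * x) (2 * y) j i / (fact j * fact i)"
proof -
  define T where "T r = (-1) ^ r * x ^ (j - r) * y ^ (i - r) / fact r" for r
  define A where "A r k = (if r \<le> k then 1 / (fact (j - k) * fact (k - r)) else (0::complex))" for r k
  define B where "B r k' = (if r \<le> k' then 1 / (fact (i - k') * fact (k' - r)) else (0::complex))" for r k'
  have summand: "x ^ (j - k) * y ^ (i - k') / (fact k * fact (j - k) * fact k' * fact (i - k'))
      * complex_hermite x y k k' = (\<Sum>r\<le>min i j. T r * A r k * B r k')"
    if kk: "k \<le> j" "k' \<le> i" for k k'
  proof -
    have "x ^ (j - k) * y ^ (i - k') / (fact k * fact (j - k) * fact k' * fact (i - k'))
        * complex_hermite x y k k' = (\<Sum>r\<le>min k k'. T r * A r k * B r k')"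
      unfolding complex_hermite_def sum_distrib_left
    proof (rule sum.cong[OF refl])
      fix r assume r: "r \<in> {..min k k'}"
      have "x ^ (j - r) = x ^ (j - k) * x ^ (k - r)" "y ^ (i - r) = y ^ (i - k') * y ^ (k' - r)"
        using r kk by (simp_all flip: power_add)
      with r show "x ^ (j - k) * y ^ (i - k') / (fact k * fact (j - k) * fact k' * fact (i - k'))
          * ((-1) ^ r * (fact k * fact k' / (fact r * fact (k - r) * fact (k' - r))) * x ^ (k - r) * y ^ (k' - r))
          = T r * A r k * B r k'"
        by (simp add: T_def A_def B_def field_simps)
    qed
    also have "\<dots> = (\<Sum>r\<le>min i j. T r * A r k * B r k')"
      by (rule sum.mono_neutral_left) (use kk in \<open>auto simp: A_def B_def\<close>)
    finally show ?thesis .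
  qed
  have "(\<Sum>k\<le>j. \<Sum>k'\<le>i. x ^ (j - k) * y ^ (i - k') / (fact k * fact (j - k) * fact k' * fact (i - k'))
      * complex_hermite x y k k') = (\<Sum>k\<le>j. \<Sum>k'\<le>i. \<Sum>r\<le>min i j. T r * A r k * B r k')"
    using summand by (auto intro!: sum.cong)
  also have "\<dots> = (\<Sum>k\<le>j. \<Sum>r\<le>min i j. \<Sum>k'\<le>i. T r * A r k * B r k')"
    by (rule sum.cong[OF refl], rule sum.swap)
  also have "\<dots> = (\<Sum>r\<le>min i j. \<Sum>k\<le>j. \<Sum>k'\<le>i. T r * A r k * B r k')"
    by (rule sum.swap)
  also have "\<dots> = (\<Sum>r\<le>min i j. T r * ((\<Sum>k\<le>j. A r k) * (\<Sum>k'\<le>i. B r k')))"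
    unfolding sum_product by (simp add: sum_distrib_left mult.assoc)
  also have "\<dots> = (\<Sum>r\<le>min i j. T r * ((2 ^ (j - r) / fact (j - r)) * (2 ^ (i - r) / fact (i - r))))"
    by (rule sum.cong[OF refl]) (simp add: A_def B_def sum_inverse_fact_shifted)
  also have "\<dots> = complex_hermite (2 * x) (2 * y) j i / (fact j * fact i)"
    unfolding complex_hermite_def sum_divide_distrib
    by (rule sum.cong) (auto simp: T_def power_mult_distrib field_simps)
  finally show ?thesis .
qed

lemma displ_term_product:
  "displ_term x j l k * (-1) ^ l * cnj (displ_term x i l k')
   = x ^ (j - k) * cnj x ^ (i - k') * of_real (sqrt (fact i * fact j)) / (fact k * fact (j - k) * fact k' * fact (i - k'))
     * parity_series_term x (cnj x) k k' l"
proof (cases "k \<le> l \<and> k' \<le> l")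
  case True
  have "sqrt (fact i * fact l) * sqrt (fact j * fact l) = fact l * sqrt (fact i * fact j :: real)"
    by (simp add: real_sqrt_mult)
  then have sq: "complex_of_real (sqrt (fact i * fact l)) * of_real (sqrt (fact j * fact l))
      = fact l * of_real (sqrt (fact i * fact j))"
    by (metis of_real_mult of_real_fact)
  show ?thesis
    using True unfolding displ_term_def parity_series_term_def
    by (simp add: of_real_divide field_simps sq)
qed (auto simp: displ_term_def parity_series_term_def)

lemma displ_parity_product:
  "displ \<alpha> j l * (-1) ^ l * cnj (displ \<alpha> i l)
   = of_real (exp (- (cmod \<alpha>)\<^sup>2)) * of_real (sqrt (fact i * fact j))
     * (\<Sum>k\<le>j. \<Sum>k'\<le>i. \<alpha> ^ (j - k) * cnj \<alpha> ^ (i - k') / (fact k * fact (j - k) * fact k' * fact (i - k'))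
        * parity_series_term \<alpha> (cnj \<alpha>) k k' l)"
proof -
  have gauss: "of_real (exp (- ((cmod \<alpha>)\<^sup>2 / 2))) * cnj (of_real (exp (- ((cmod \<alpha>)\<^sup>2 / 2))))
      = (of_real (exp (- (cmod \<alpha>)\<^sup>2)) :: complex)"
    by (simp flip: of_real_mult exp_add)
  have "displ \<alpha> j l * (-1) ^ l * cnj (displ \<alpha> i l) = of_real (exp (- (cmod \<alpha>)\<^sup>2))
      * (\<Sum>k\<le>j. \<Sum>k'\<le>i. displ_term \<alpha> j l k * (-1) ^ l * cnj (displ_term \<alpha> i l k'))"
    unfolding displ_eq_sum gauss[symmetric]
    by (simp add: sum_product sum_distrib_left sum_distrib_right mult_ac)
  then show ?thesis
    unfolding displ_term_product by (simp add: sum_distrib_left mult_ac)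
qed

lemma displaced_parity_eq:
  "displaced_parity \<alpha> j i = of_real (exp (- 2 * (cmod \<alpha>)\<^sup>2))
     * complex_hermite (2 * \<alpha>) (2 * cnj \<alpha>) j i / of_real (sqrt (fact j * fact i))"
proof -
  define c where "c k k' = \<alpha> ^ (j - k) * cnj \<alpha> ^ (i - k') / (fact k * fact (j - k) * fact k' * fact (i - k'))" for k k'
  define s :: complex where "s = of_real (sqrt (fact i * fact j))"
  have "(\<lambda>l. displ \<alpha> j l * (-1) ^ l * cnj (displ \<alpha> i l)) sums (of_real (exp (- (cmod \<alpha>)\<^sup>2)) * s
      * (\<Sum>k\<le>j. \<Sum>k'\<le>i. c k k' * (exp (- (\<alpha> * cnj \<alpha>)) * complex_hermite \<alpha> (cnj \<alpha>) k k')))"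
    unfolding displ_parity_product c_def s_def by (intro sums_mult sums_sum parity_series_sums)
  also have "\<dots> = of_real (exp (- (cmod \<alpha>)\<^sup>2)) * exp (- (\<alpha> * cnj \<alpha>)) * s
      * (\<Sum>k\<le>j. \<Sum>k'\<le>i. c k k' * complex_hermite \<alpha> (cnj \<alpha>) k k')"
    by (simp add: sum_distrib_left mult_ac)
  also have "(\<Sum>k\<le>j. \<Sum>k'\<le>i. c k k' * complex_hermite \<alpha> (cnj \<alpha>) k k')
      = complex_hermite (2 * \<alpha>) (2 * cnj \<alpha>) j i / (fact j * fact i)"
    unfolding c_def by (rule complex_hermite_doubling)
  also have "of_real (exp (- (cmod \<alpha>)\<^sup>2)) * exp (- (\<alpha> * cnj \<alpha>)) = of_real (exp (- 2 * (cmod \<alpha>)\<^sup>2))"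
    by (simp flip: complex_norm_square exp_of_real exp_add)
  finally have sums: "(\<lambda>l. displ \<alpha> j l * (-1) ^ l * cnj (displ \<alpha> i l))
      sums (of_real (exp (- 2 * (cmod \<alpha>)\<^sup>2)) * s * (complex_hermite (2 * \<alpha>) (2 * cnj \<alpha>) j i / (fact j * fact i)))" .
  have "sqrt (fact i * fact j) * sqrt (fact j * fact i) = (fact j * fact i :: real)"
    by (simp add: mult.commute)
  then have "s * of_real (sqrt (fact j * fact i)) = fact j * fact i"
    unfolding s_def by (metis of_real_mult of_real_fact)
  with sums show ?thesis
    unfolding displaced_parity_def by (simp add: sums_unique[symmetric] field_simps)
qed

definition wigner_poly :: "nat \<Rightarrow> fock_op \<Rightarrow> complex \<Rightarrow> complex" where
  "wigner_poly N A \<alpha> = (\<Sum>i\<le>N. \<Sum>j\<le>N.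
     A i j * complex_hermite (2 * \<alpha>) (2 * cnj \<alpha>) j i / of_real (sqrt (fact j * fact i)))"

lemma wigner_eq_poly:
  assumes "fock_supported N A"
  shows "wigner A \<alpha> = of_real (2 / pi) * of_real (exp (- 2 * (cmod \<alpha>)\<^sup>2)) * wigner_poly N A \<alpha>"
proof -
  have "{(i, j). A i j \<noteq> 0} \<subseteq> {..N} \<times> {..N}"
    using fock_supported_nonzero[OF assms] by auto
  then have "(\<Sum>(i, j)\<in>{(i, j). A i j \<noteq> 0}. A i j * displaced_parity \<alpha> j i)
      = (\<Sum>(i, j)\<in>{..N} \<times> {..N}. A i j * displaced_parity \<alpha> j i)"
    by (intro sum.mono_neutral_left) auto
  also have "\<dots> = of_real (exp (- 2 * (cmod \<alpha>)\<^sup>2)) * wigner_poly N A \<alpha>"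
    by (simp add: sum.cartesian_product[symmetric] wigner_poly_def displaced_parity_eq
        sum_distrib_left mult_ac)
  finally show ?thesis by (simp add: wigner_def)
qed

lemma wigner_poly_diff:
  "wigner_poly N (\<lambda>i j. A i j - l * B i j) \<alpha> = wigner_poly N A \<alpha> - l * wigner_poly N B \<alpha>"
  unfolding wigner_poly_def sum_distrib_left sum_subtractf[symmetric]
  by (intro sum.cong refl) (simp add: diff_divide_distrib left_diff_distrib)

definition wigner_coeff :: "fock_op \<Rightarrow> nat \<Rightarrow> nat \<Rightarrow> nat \<Rightarrow> complex" where
  "wigner_coeff A i j r = (if r \<le> i \<and> r \<le> j
     then A i j * (-1) ^ r * (fact j * fact i / (fact r * fact (j - r) * fact (i - r))) * 2 ^ (j - r) * 2 ^ (i - r)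
       / of_real (sqrt (fact j * fact i))
     else 0)"

lemma wigner_poly_monomials:
  "wigner_poly N A \<alpha>
   = (\<Sum>(i, j, r)\<in>{..N} \<times> {..N} \<times> {..N}. wigner_coeff A i j r * \<alpha> ^ (j - r) * cnj \<alpha> ^ (i - r))"
proof -
  have "A i j * complex_hermite (2 * \<alpha>) (2 * cnj \<alpha>) j i / of_real (sqrt (fact j * fact i))
      = (\<Sum>r\<le>N. wigner_coeff A i j r * \<alpha> ^ (j - r) * cnj \<alpha> ^ (i - r))" if "i \<le> N" for i j
  proof -
    have "A i j * complex_hermite (2 * \<alpha>) (2 * cnj \<alpha>) j i / of_real (sqrt (fact j * fact i))
        = (\<Sum>r\<le>min j i. wigner_coeff A i j r * \<alpha> ^ (j - r) * cnj \<alpha> ^ (i - r))"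
      unfolding complex_hermite_def sum_distrib_left sum_divide_distrib
      by (rule sum.cong) (auto simp: wigner_coeff_def power_mult_distrib field_simps)
    also have "\<dots> = (\<Sum>r\<le>N. wigner_coeff A i j r * \<alpha> ^ (j - r) * cnj \<alpha> ^ (i - r))"
      using that by (intro sum.mono_neutral_left) (auto simp: wigner_coeff_def)
    finally show ?thesis .
  qed
  then show ?thesis
    by (simp add: wigner_poly_def sum.cartesian_product)
qed

lemma polyfun_grouped_coeffs_eq_0:
  fixes c :: "'a \<Rightarrow> 'b::{idom,real_normed_div_algebra}" and e :: "'a \<Rightarrow> nat"
  assumes S: "finite S" and Z: "infinite Z" and vanish: "\<And>z. z \<in> Z \<Longrightarrow> (\<Sum>x\<in>S. c x * z ^ e x) = 0"
  shows "(\<Sum>x\<in>{x\<in>S. e x = n}. c x) = 0"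
proof -
  define M where "M = Max (insert 0 (e ` S))"
  have eM: "e x \<le> M" if "x \<in> S" for x
    unfolding M_def using S that by (intro Max_ge) auto
  define d where "d n = (\<Sum>x\<in>{x\<in>S. e x = n}. c x)" for n
  have grouped: "(\<Sum>x\<in>S. c x * z ^ e x) = (\<Sum>n\<le>M. d n * z ^ n)" for z
  proof -
    have "(\<Sum>x\<in>S. c x * z ^ e x) = (\<Sum>n\<le>M. \<Sum>x\<in>{x\<in>S. e x = n}. c x * z ^ e x)"
      by (rule sum.group[symmetric]) (use S eM in auto)
    also have "\<dots> = (\<Sum>n\<le>M. d n * z ^ n)"
      unfolding d_def sum_distrib_right by (rule sum.cong) auto
    finally show ?thesis .
  qed
  show ?thesis
  proof (cases "n \<le> M")
    case True
    have "Z \<subseteq> {z. (\<Sum>n\<le>M. d n * z ^ n) = 0}" using vanish grouped by auto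
    with Z have "infinite {z. (\<Sum>n\<le>M. d n * z ^ n) = 0}" using finite_subset by blast
    with True have "d n = 0" using polyfun_roots_finite[of d n M] by blast
    then show ?thesis by (simp add: d_def)
  next
    case False
    then have "{x\<in>S. e x = n} = {}" using eM by fastforce
    then show ?thesis by (metis sum.empty)
  qed
qed

lemma infinite_unit_circle: "infinite (sphere (0::complex) 1)"
proof
  assume "finite (sphere (0::complex) 1)"
  moreover have "connected (sphere (0::complex) 1)" by (rule connected_sphere) simp
  ultimately obtain a where "sphere (0::complex) 1 \<subseteq> {a}"
    using connected_finite_iff_sing by (metis order_refl empty_subsetI)
  moreover have "1 \<in> sphere (0::complex) 1" "-1 \<in> sphere (0::complex) 1" by auto
  ultimately show False by (metis empty_iff insert_iff subsetD one_neq_neg_one)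
qed

lemma infinite_range_of_real: "infinite (range (of_real :: real \<Rightarrow> 'a::real_algebra_1))"
  using finite_imageD[of of_real "UNIV :: real set"] infinite_UNIV_char_0
  by (auto simp: inj_on_def)

lemma norm_one_power_cnj_power:
  fixes u :: complex
  assumes "cmod u = 1" "b \<le> N"
  shows "u ^ a * cnj u ^ b * u ^ N = u ^ (a + N - b)"
proof -
  have "cnj u ^ b * u ^ b = 1"
    using assms(1) by (metis complex_norm_square mult.commute of_real_1 power_mult_distrib power_one one_power2)
  moreover have "u ^ N = u ^ b * u ^ (N - b)" "u ^ (a + N - b) = u ^ a * u ^ (N - b)"
    using assms(2) by (simp_all flip: power_add)
  ultimately show ?thesis by (metis mult.assoc mult_1_right)
qed

lemma conj_polyfun_coeffs_eq_0:
  fixes c :: "'a \<Rightarrow> complex" and p q :: "'a \<Rightarrow> nat"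
  assumes S: "finite S" and vanish: "\<And>z. (\<Sum>x\<in>S. c x * z ^ p x * cnj z ^ q x) = 0"
  shows "(\<Sum>x\<in>{x\<in>S. p x = a \<and> q x = b}. c x) = 0"
proof -
  define N where "N = Max (insert b (q ` S))"
  have qN: "q x \<le> N" if "x \<in> S" for x
    unfolding N_def using S that by (intro Max_ge) auto
  have bN: "b \<le> N"
    unfolding N_def using S by (intro Max_ge) auto
  \<comment> \<open>polar coordinates: on \<open>z = t u\<close> with \<open>|u| = 1\<close>, the monomial \<open>z ^ p * cnj z ^ q\<close> times \<open>u ^ N\<close> is
     \<open>t ^ (p + q) * u ^ (p + N - q)\<close>; compare coefficients first in \<open>u\<close>, then in \<open>t\<close>\<close>
  have angular: "(\<Sum>x\<in>{x\<in>S. p x + N - q x = d}. c x * of_real t ^ (p x + q x)) = 0" for t d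
  proof -
    have "(\<Sum>x\<in>S. (c x * of_real t ^ (p x + q x)) * u ^ (p x + N - q x)) = 0" if u: "u \<in> sphere 0 1" for u
    proof -
      have "(\<Sum>x\<in>S. (c x * of_real t ^ (p x + q x)) * u ^ (p x + N - q x))
          = (\<Sum>x\<in>S. c x * (of_real t * u) ^ p x * cnj (of_real t * u) ^ q x) * u ^ N"
        unfolding sum_distrib_right
      proof (rule sum.cong[OF refl])
        fix x assume "x \<in> S"
        then have "u ^ (p x + N - q x) = u ^ p x * cnj u ^ q x * u ^ N"
          using norm_one_power_cnj_power u qN by simp
        then show "c x * of_real t ^ (p x + q x) * u ^ (p x + N - q x)
            = c x * (of_real t * u) ^ p x * cnj (of_real t * u) ^ q x * u ^ N"
          by (simp add: power_mult_distrib power_add mult_ac)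
      qed
      also have "\<dots> = 0" by (simp only: vanish mult_zero_left)
      finally show ?thesis .
    qed
    then show ?thesis
      by (rule polyfun_grouped_coeffs_eq_0[OF S infinite_unit_circle,
          of "\<lambda>x. c x * of_real t ^ (p x + q x)" "\<lambda>x. p x + N - q x"])
  qed
  have radial: "(\<Sum>x\<in>{x\<in>{x\<in>S. p x + N - q x = d}. p x + q x = n}. c x) = 0" for d n
    using S angular
    by (intro polyfun_grouped_coeffs_eq_0[OF _ infinite_range_of_real, of _ c "\<lambda>x. p x + q x"]) auto
  have "{x\<in>{x\<in>S. p x + N - q x = a + N - b}. p x + q x = a + b} = {x\<in>S. p x = a \<and> q x = b}"
    using qN bN by auto
  with radial[of "a + N - b" "a + b"] show ?thesis by simp
qed

lemma wigner_poly_coeffs_eq_0: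
  assumes vanish: "\<And>\<alpha>. wigner_poly N A \<alpha> = 0"
  shows "(\<Sum>(i', j', r)\<in>{(i', j', r). i' \<le> N \<and> j' \<le> N \<and> r \<le> N \<and> j' - r = j \<and> i' - r = i}.
      wigner_coeff A i' j' r) = 0"
proof -
  have "(\<Sum>x\<in>{x\<in>{..N} \<times> {..N} \<times> {..N}. (\<lambda>(i', j', r). j' - r) x = j \<and> (\<lambda>(i', j', r). i' - r) x = i}.
      (\<lambda>(i', j', r). wigner_coeff A i' j' r) x) = 0"
    by (rule conj_polyfun_coeffs_eq_0) (use vanish in \<open>simp_all add: wigner_poly_monomials split_def\<close>)
  moreover have "{x\<in>{..N} \<times> {..N} \<times> {..N}. (\<lambda>(i', j', r). j' - r) x = j \<and> (\<lambda>(i', j', r). i' - r) x = i}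
      = {(i', j', r). i' \<le> N \<and> j' \<le> N \<and> r \<le> N \<and> j' - r = j \<and> i' - r = i}"
    by auto
  ultimately show ?thesis by simp
qed

lemma wigner_poly_eq_0_imp_zero:
  assumes supp: "fock_supported N A" and vanish: "\<And>\<alpha>. wigner_poly N A \<alpha> = 0"
  shows "A i j = 0"
proof (induction "N - i" arbitrary: i j rule: less_induct)
  case less
  show ?case
  proof (cases "i \<le> N \<and> j \<le> N")
    case False
    then show ?thesis using fock_supported_nonzero[OF supp] by blast
  next
    case True
    define T where "T = {(i', j', r). i' \<le> N \<and> j' \<le> N \<and> r \<le> N \<and> j' - r = j \<and> i' - r = i}"
    \<comment> \<open>all other terms of the coefficient of \<open>\<alpha> ^ j * cnj \<alpha> ^ i\<close> involve entries \<open>A (i + r) (j + r)\<close> with \<open>r > 0\<close>\<close>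
    have "(\<Sum>(i', j', r)\<in>T. wigner_coeff A i' j' r) = (\<Sum>(i', j', r)\<in>{(i, j, 0)}. wigner_coeff A i' j' r)"
    proof (rule sum.mono_neutral_right)
      show "finite T"
        by (rule finite_subset[of _ "{..N} \<times> {..N} \<times> {..N}"]) (auto simp: T_def)
      show "{(i, j, 0)} \<subseteq> T" using True by (simp add: T_def)
      show "\<forall>x\<in>T - {(i, j, 0)}. (case x of (i', j', r) \<Rightarrow> wigner_coeff A i' j' r) = 0"
      proof
        fix x assume x: "x \<in> T - {(i, j, 0)}"
        obtain i' j' r where xe: "x = (i', j', r)" by (cases x)
        show "(case x of (i', j', r) \<Rightarrow> wigner_coeff A i' j' r) = 0"
        proof (cases "r \<le> i' \<and> r \<le> j'")
          case True
          then have "i' = i + r" "j' = j + r" "0 < r" "i' \<le> N"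
            using x by (auto simp: xe T_def)
          then have "A i' j' = 0" using less[of i' j'] by simp
          then show ?thesis by (simp add: xe wigner_coeff_def)
        next
          case False
          then show ?thesis by (auto simp: xe wigner_coeff_def)
        qed
      qed
    qed
    then have "wigner_coeff A i j 0 = 0"
      using wigner_poly_coeffs_eq_0[OF vanish, of j i] by (simp add: T_def)
    then show ?thesis by (simp add: wigner_coeff_def)
  qed
qed

lemma binomial_inversion:
  fixes f :: "nat \<Rightarrow> 'a::comm_ring_1"
  shows "(\<Sum>i\<le>m. of_nat (m choose i) * (\<Sum>s\<le>i. (-1) ^ (i - s) * of_nat (i choose s) * f s)) = f m"
proof -
  have inner: "(\<Sum>i\<le>m. if s \<le> i then of_nat (m choose i) * ((-1) ^ (i - s) * of_nat (i choose s)) else 0)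
      = (if s = m then 1 else (0::'a))" if s: "s \<le> m" for s
  proof -
    have "(\<Sum>i\<le>m. if s \<le> i then of_nat (m choose i) * ((-1) ^ (i - s) * of_nat (i choose s)) else (0::'a))
        = (\<Sum>i\<in>{s..m}. of_nat (m choose s) * ((-1) ^ (i - s) * of_nat (m - s choose (i - s))))"
    proof (rule sum.mono_neutral_cong_right)
      fix i assume "i \<in> {s..m}"
      then have "of_nat (m choose i) * of_nat (i choose s) = (of_nat (m choose s) * of_nat (m - s choose (i - s)) :: 'a)"
        by (simp add: choose_mult flip: of_nat_mult)
      moreover have "(if s \<le> i then of_nat (m choose i) * ((-1) ^ (i - s) * of_nat (i choose s)) else 0)
          = (-1) ^ (i - s) * (of_nat (m choose i) * of_nat (i choose s) :: 'a)"
        using \<open>i \<in> {s..m}\<close> by (simp add: mult_ac)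
      ultimately show "(if s \<le> i then of_nat (m choose i) * ((-1) ^ (i - s) * of_nat (i choose s)) else 0)
          = of_nat (m choose s) * ((-1) ^ (i - s) * of_nat (m - s choose (i - s)) :: 'a)"
        by (simp only: mult.left_commute)
    qed auto
    also have "\<dots> = of_nat (m choose s) * (\<Sum>j\<le>m - s. (-1) ^ j * of_nat (m - s choose j))"
      using sum.shift_bounds_cl_nat_ivl[of "\<lambda>i. (-1) ^ (i - s) * of_nat (m - s choose (i - s)) :: 'a" 0 s "m - s"] s
      by (simp add: atLeast0AtMost flip: sum_distrib_left)
    also have "\<dots> = (if s = m then 1 else 0)"
      using choose_alternating_sum[of "m - s", where 'a='a] s by auto
    finally show ?thesis .
  qed
  have "(\<Sum>i\<le>m. of_nat (m choose i) * (\<Sum>s\<le>i. (-1) ^ (i - s) * of_nat (i choose s) * f s))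
      = (\<Sum>i\<le>m. \<Sum>s\<le>m. f s * (if s \<le> i then of_nat (m choose i) * ((-1) ^ (i - s) * of_nat (i choose s)) else 0))"
    by (rule sum.cong[OF refl], subst sum_distrib_left, rule sum.mono_neutral_cong_left) (auto simp: mult_ac)
  also have "\<dots> = (\<Sum>s\<le>m. f s * (\<Sum>i\<le>m. if s \<le> i then of_nat (m choose i) * ((-1) ^ (i - s) * of_nat (i choose s)) else 0))"
    by (subst sum.swap) (simp add: sum_distrib_left)
  also have "\<dots> = (\<Sum>s\<le>m. if s = m then f s else 0)"
    by (rule sum.cong) (simp_all add: inner)
  finally show ?thesis by simp
qed

lemma complex_hermite_diag:
  "complex_hermite (2 * \<alpha>) (2 * cnj \<alpha>) i i / of_real (sqrt (fact i * fact i))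
   = (\<Sum>s\<le>i. (-1) ^ (i - s) * of_nat (i choose s) * ((4 * (\<alpha> * cnj \<alpha>)) ^ s / fact s))"
proof -
  have four: "(2::complex) ^ n * 2 ^ n = 4 ^ n" for n
    by (simp flip: power_mult_distrib)
  have "complex_hermite (2 * \<alpha>) (2 * cnj \<alpha>) i i / of_real (sqrt (fact i * fact i))
      = (\<Sum>r\<in>{0..i}. (-1) ^ r * of_nat (i choose r) * ((4 * (\<alpha> * cnj \<alpha>)) ^ (i - r) / fact (i - r)))"
    unfolding complex_hermite_def sum_divide_distrib atLeast0AtMost
    by (rule sum.cong) (auto simp: binomial_fact power_mult_distrib four field_simps)
  also have "\<dots> = (\<Sum>s\<in>{0..i}. (-1) ^ (i - s) * of_nat (i choose s) * ((4 * (\<alpha> * cnj \<alpha>)) ^ s / fact s))"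
    by (subst sum.atLeastAtMost_rev) (auto simp: binomial_symmetric[symmetric] intro!: sum.cong)
  finally show ?thesis by (simp add: atLeast0AtMost)
qed

lemma norm_power_even_complex: "complex_of_real (cmod \<alpha> ^ (2 * m)) = (\<alpha> * cnj \<alpha>) ^ m"
  by (subst power_mult, subst of_real_power, subst complex_norm_square) (rule refl)

lemma wigner_poly_binomial_state:
  assumes "m \<le> N"
  shows "wigner_poly N (binomial_state m) \<alpha> = of_real (2 ^ m / fact m) * of_real (cmod \<alpha> ^ (2 * m))"
proof -
  have "wigner_poly N (binomial_state m) \<alpha>
      = (\<Sum>i\<le>N. binomial_state m i i * complex_hermite (2 * \<alpha>) (2 * cnj \<alpha>) i i / of_real (sqrt (fact i * fact i)))"
  proof (unfold wigner_poly_def, rule sum.cong[OF refl])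
    fix i assume "i \<in> {..N}"
    then have "(\<Sum>j\<le>N. binomial_state m i j * complex_hermite (2 * \<alpha>) (2 * cnj \<alpha>) j i / of_real (sqrt (fact j * fact i)))
        = (\<Sum>j\<in>{i}. binomial_state m i j * complex_hermite (2 * \<alpha>) (2 * cnj \<alpha>) j i / of_real (sqrt (fact j * fact i)))"
      by (intro sum.mono_neutral_right) (auto simp: binomial_state_def)
    then show "(\<Sum>j\<le>N. binomial_state m i j * complex_hermite (2 * \<alpha>) (2 * cnj \<alpha>) j i / of_real (sqrt (fact j * fact i)))
        = binomial_state m i i * complex_hermite (2 * \<alpha>) (2 * cnj \<alpha>) i i / of_real (sqrt (fact i * fact i))"
      by simp
  qed
  also have "\<dots> = (\<Sum>i\<le>m. of_nat (m choose i) * (\<Sum>s\<le>i. (-1) ^ (i - s) * of_nat (i choose s)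
      * ((4 * (\<alpha> * cnj \<alpha>)) ^ s / fact s))) / 2 ^ m"
    unfolding sum_divide_distrib complex_hermite_diag[symmetric] using assms
    by (intro sum.mono_neutral_cong_right) (auto simp: binomial_state_def)
  also have "\<dots> = (4 * (\<alpha> * cnj \<alpha>)) ^ m / fact m / 2 ^ m"
    by (simp only: binomial_inversion)
  also have "\<dots> = of_real (2 ^ m / fact m) * of_real (cmod \<alpha> ^ (2 * m))"
  proof -
    have "(4::complex) ^ m = 2 ^ m * 2 ^ m" by (simp flip: power_mult_distrib)
    then show ?thesis unfolding norm_power_even_complex by (simp add: power_mult_distrib)
  qed
  finally show ?thesis .
qed

lemma is_eigvec_vertigo_binomial_state: "1 \<le> t \<Longrightarrow> is_eigvec_vertigo t (binomial_state m)"
  by (auto simp: is_eigvec_vertigo_def vertigo_binomial_state)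

lemma some_eigvec_vertigo_iff_binomial_state:
  assumes "density_op \<rho>"
  shows "(\<exists>t>1. is_eigvec_vertigo t \<rho>) \<longleftrightarrow> (\<exists>m. \<rho> = binomial_state m)"
proof
  assume "\<exists>t>1. is_eigvec_vertigo t \<rho>"
  then obtain t where "1 < t" "is_eigvec_vertigo t \<rho>" by blast
  then show "\<exists>m. \<rho> = binomial_state m" by (rule eigvec_vertigo_imp_binomial_state[OF assms])
next
  assume "\<exists>m. \<rho> = binomial_state m"
  then have "is_eigvec_vertigo 2 \<rho>" using is_eigvec_vertigo_binomial_state by auto
  then show "\<exists>t>1. is_eigvec_vertigo t \<rho>" by (intro exI[of _ 2]) simp
qed

lemma all_eigvec_vertigo_iff_binomial_state:
  assumes "density_op \<rho>"
  shows "(\<forall>t\<ge>1. is_eigvec_vertigo t \<rho>) \<longleftrightarrow> (\<exists>m. \<rho> = binomial_state m)"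
proof
  assume "\<forall>t\<ge>1. is_eigvec_vertigo t \<rho>"
  then have "\<exists>t>1. is_eigvec_vertigo t \<rho>" by (intro exI[of _ 2]) simp
  then show "\<exists>m. \<rho> = binomial_state m" by (simp add: some_eigvec_vertigo_iff_binomial_state[OF assms])
qed (auto simp: is_eigvec_vertigo_binomial_state)

lemma wigner_binomial_state:
  "wigner (binomial_state m) \<alpha>
   = of_real (2 / pi * 2 ^ m / fact m) * of_real (cmod \<alpha> ^ (2 * m) * exp (- 2 * (cmod \<alpha>)\<^sup>2))"
  by (simp add: wigner_eq_poly[OF binomial_state_supported] wigner_poly_binomial_state)

lemma wigner_gaussian_imp_binomial_state:
  assumes dens: "density_op \<rho>"
    and gaussian: "\<And>\<alpha>. wigner \<rho> \<alpha> = c * of_real (cmod \<alpha> ^ (2 * m) * exp (- 2 * (cmod \<alpha>)\<^sup>2))"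
  shows "\<rho> = binomial_state m"
proof -
  obtain N0 where "fock_supported N0 \<rho>" using dens by (rule density_op_supported)
  define N where "N = max N0 m"
  have supp: "fock_supported N \<rho>"
    using \<open>fock_supported N0 \<rho>\<close> by (rule fock_supported_mono) (simp add: N_def)
  have suppB: "fock_supported N (binomial_state m)"
    using binomial_state_supported by (rule fock_supported_mono) (simp add: N_def)
  define l where "l = of_real (pi / 2 * fact m / 2 ^ m) * c"
  have "wigner_poly N \<rho> \<alpha> = l * wigner_poly N (binomial_state m) \<alpha>" for \<alpha>
  proof -
    have "of_real (2 / pi) * of_real (exp (- 2 * (cmod \<alpha>)\<^sup>2)) * wigner_poly N \<rho> \<alpha>
        = c * of_real (cmod \<alpha> ^ (2 * m) * exp (- 2 * (cmod \<alpha>)\<^sup>2))"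
      using gaussian wigner_eq_poly[OF supp] by metis
    then have "wigner_poly N \<rho> \<alpha> = of_real (pi / 2) * c * of_real (cmod \<alpha> ^ (2 * m))"
      by (simp add: field_simps)
    then show ?thesis by (simp add: wigner_poly_binomial_state N_def l_def)
  qed
  then have "wigner_poly N (\<lambda>i j. \<rho> i j - l * binomial_state m i j) \<alpha> = 0" for \<alpha>
    by (simp add: wigner_poly_diff)
  then have "\<rho> i j - l * binomial_state m i j = 0" for i j
    by (rule wigner_poly_eq_0_imp_zero[OF fock_supported_diff[OF supp suppB]])
  then have "\<rho> i j = l * binomial_state m i j" for i j by simp
  then show ?thesis by (rule density_op_eq_binomial_state[OF dens])
qed

lemma wigner_gaussian_iff_binomial_state:
  assumes "density_op \<rho>"
  shows "(\<exists>m c. \<forall>\<alpha>. wigner \<rho> \<alpha> = c * of_real (cmod \<alpha> ^ (2 * m) * exp (- 2 * (cmod \<alpha>)\<^sup>2)))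
     \<longleftrightarrow> (\<exists>m. \<rho> = binomial_state m)"
  using wigner_gaussian_imp_binomial_state[OF assms] wigner_binomial_state by metis

theorem lemma11:
  fixes \<rho> :: fock_op
  assumes "density_op \<rho>"
  shows "((\<exists>t>1. is_eigvec_vertigo t \<rho>) \<longleftrightarrow> (\<forall>t\<ge>1. is_eigvec_vertigo t \<rho>))
       \<and> ((\<forall>t\<ge>1. is_eigvec_vertigo t \<rho>) \<longleftrightarrow>
            (\<exists>m::nat. \<exists>c::complex. \<forall>\<alpha>. wigner \<rho> \<alpha> =
                c * complex_of_real ((cmod \<alpha>) ^ (2 * m) * exp (- 2 * (cmod \<alpha>)\<^sup>2))))
       \<and> ((\<exists>m::nat. \<exists>c::complex. \<forall>\<alpha>. wigner \<rho> \<alpha> =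
                c * complex_of_real ((cmod \<alpha>) ^ (2 * m) * exp (- 2 * (cmod \<alpha>)\<^sup>2)))
          \<longleftrightarrow> (\<exists>m::nat. \<rho> = (\<lambda>i j. if i = j \<and> i \<le> m
                 then complex_of_real (real (m choose i) / 2 ^ m) else 0)))
       \<and> (\<forall>m::nat. \<forall>c::complex.
            (\<forall>\<alpha>. wigner \<rho> \<alpha> =
                c * complex_of_real ((cmod \<alpha>) ^ (2 * m) * exp (- 2 * (cmod \<alpha>)\<^sup>2)))
            \<longrightarrow> (\<forall>t\<ge>1. vertigo t \<rho> = (\<lambda>i j. complex_of_real (t ^ m) * \<rho> i j)))"
proof -
  have "\<forall>t\<ge>1. vertigo t \<rho> = (\<lambda>i j. of_real (t ^ m) * \<rho> i j)"
    if "\<forall>\<alpha>. wigner \<rho> \<alpha> = c * of_real (cmod \<alpha> ^ (2 * m) * exp (- 2 * (cmod \<alpha>)\<^sup>2))" for m c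
    using wigner_gaussian_imp_binomial_state[OF assms] that vertigo_binomial_state by simp
  then show ?thesis
    unfolding binomial_state_def[symmetric] some_eigvec_vertigo_iff_binomial_state[OF assms]
      all_eigvec_vertigo_iff_binomial_state[OF assms] wigner_gaussian_iff_binomial_state[OF assms]
    by blast
qed

end
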